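(* Let $p$ be an odd prime, $\ell$ an integer not divisible by $p$, $a$ the remainder of $\ell$ mod $p$, $\nu_i=\lfloor\frac{a+i\ell}{p}\rfloor$ and $n_i=\min_{0\le j\le p-1-i}(\nu_{i+j}-\nu_j)$ for $0\le i\le p-1$. Fix $0\le k,i\le p-1$ with $k+i\le p-1$ and put $h=p-i$, and for $0\le j\le p-1$ let $\mu^{(k)}_{j,i}=\delta_{j,k+i}\,\pi_K^{\nu_j-\nu_k-n_i}$ (these lie in $\mathcal{O}_K$), with $\overline{\mu}^{(k)}_{j,i}$ its reduction modulo $\mathfrak{p}_K$. Then: (1) if $j\ne k+i$, $\overline{\mu}^{(k)}_{j,i}=0$; (2) if $h\notin E$, then $\overline{\mu}^{(k)}_{k+i,i}=1$ if $h=p$ or $\operatorname{frac}((k+1)a/p)<\operatorname{frac}(ha/p)$, and $\overline{\mu}^{(k)}_{k+i,i}=0$ otherwise; (3) if $h\in E$, then $\overline{\mu}^{(k)}_{k+i,i}=1$.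
   Context: $K$ is a $p$-adic field with uniformizer $\pi_K$ and maximal ideal $\mathfrak{p}_K$. For a real $x$, $\operatorname{frac}(x)=x-\lfloor x\rfloor$. $E=\{h\in\mathbb{Z}: 1\le h<p,\ \text{and for all integers } 1\le h'<h,\ \operatorname{frac}(h'a/p)>\operatorname{frac}(ha/p)\}$. (Interpretation: in the typical setting with $H=K[w]$, $\mu^{(k)}_{j,i}$ is the coefficient of $\pi_K^{-\nu_j}w^j$ in $\pi_K^{-\nu_k}w^k\cdot\pi_K^{-n_i}w^i$, i.e. the $(j,i)$ entry of the matrix of multiplication by $\pi_K^{-\nu_k}w^k$ from the basis $\{\pi_K^{-n_i}w^i\}$ of $\mathfrak{A}_{L/K}$ to the basis $\{\pi_K^{-\nu_j}w^j\}$ of $\mathfrak{A}_\theta$.) *)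

theory Defs
  imports Complex_Main "HOL-Computational_Algebra.Primes"
begin

text \<open>Discrete valuation on a field (value at 0 is irrelevant and ignored).\<close>
definition discrete_valuation :: "('a::field \<Rightarrow> int) \<Rightarrow> bool" where
  "discrete_valuation v \<longleftrightarrow>
     (\<forall>x y. x \<noteq> 0 \<and> y \<noteq> 0 \<longrightarrow> v (x * y) = v x + v y) \<and>
     (\<forall>x y. x \<noteq> 0 \<and> y \<noteq> 0 \<and> x + y \<noteq> 0 \<longrightarrow> v (x + y) \<ge> min (v x) (v y))"

definition valring :: "('a::field \<Rightarrow> int) \<Rightarrow> 'a set" where
  "valring v = {x. x = 0 \<or> v x \<ge> 0}"

definition maxideal :: "('a::field \<Rightarrow> int) \<Rightarrow> 'a set" where
  "maxideal v = {x. x = 0 \<or> v x > 0}"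

definition resid :: "('a::field \<Rightarrow> int) \<Rightarrow> 'a \<Rightarrow> 'a set" where
  "resid v x = {y \<in> valring v. x - y \<in> maxideal v}"

definition nu :: "nat \<Rightarrow> int \<Rightarrow> nat \<Rightarrow> int" where
  "nu p l i = \<lfloor>(real_of_int (l mod int p) + real i * real_of_int l) / real p\<rfloor>"

definition nmin :: "nat \<Rightarrow> int \<Rightarrow> nat \<Rightarrow> int" where
  "nmin p l i = Min ((\<lambda>j. nu p l (i + j) - nu p l j) ` {0..p - 1 - i})"

definition Eset :: "nat \<Rightarrow> int \<Rightarrow> nat set" where
  "Eset p a = {h. 1 \<le> h \<and> h < p \<and>
      (\<forall>h'. 1 \<le> h' \<and> h' < h \<longrightarrow>
         frac (real h' * real_of_int a / real p) > frac (real h * real_of_int a / real p))}"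

definition mu :: "'a::field \<Rightarrow> nat \<Rightarrow> int \<Rightarrow> nat \<Rightarrow> nat \<Rightarrow> nat \<Rightarrow> 'a" where
  "mu \<pi> p l k j i = (if j = k + i then \<pi> powi (nu p l j - nu p l k - nmin p l i) else 0)"

end

theory Submission
  imports Defs
begin

text \<open>Put R x = x l mod p and h = p - i. From nu_j = floor ((j+1) l / p) - floor (l / p) one gets
  p (nu_(i+j) - nu_j) = i l + R h - p [R (j+1) < R h], so these differences take two adjacent values,
  the smaller one exactly when R (j+1) < R h. Hence the exponent of mu_(k+i,i) is 0 or 1, and it is 0
  iff R (k+1) < R h or no j+1 <= h has R (j+1) < R h. As R is injective on {1..<p}, the latter
  condition says precisely that h = p or h is in E; finally R x / p is the fractional part of x a / p.\<close>

lemma nu_eq_div: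
  assumes "p > 0"
  shows "nu p l j = ((int j + 1) * l) div int p - l div int p"
proof -
  have "(real_of_int (l mod int p) + real j * real_of_int l) / real p
      = of_int (l mod int p + int j * l) / of_int (int p)"
    by simp
  then have "nu p l j = (l mod int p + int j * l) div int p"
    unfolding nu_def by (simp only: floor_divide_of_int_eq)
  also have "l mod int p + int j * l = (int j + 1) * l + int p * (- (l div int p))"
    by (simp add: algebra_simps minus_div_mult_eq_mod[symmetric])
  also have "((int j + 1) * l + int p * (- (l div int p))) div int p
      = - (l div int p) + (int j + 1) * l div int p"
    using assms by (intro div_mult_self2) simp
  finally show ?thesis by simp
qed

lemma mod_diff_mod_eq:
  fixes a b p :: int
  assumes "p > 0"
  shows "(a mod p - b mod p) mod p = a mod p - b mod p + (if a mod p < b mod p then p else 0)"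
proof (cases "a mod p < b mod p")
  case True
  have "(a mod p - b mod p) mod p = (a mod p - b mod p + p) mod p" by simp
  also have "\<dots> = a mod p - b mod p + p"
    using True assms pos_mod_bound[of p b] pos_mod_sign[of p a]
    by (intro mod_pos_pos_trivial) linarith+
  finally show ?thesis using True by simp
next
  case False
  have "(a mod p - b mod p) mod p = a mod p - b mod p"
    using False assms pos_mod_bound[of p a] pos_mod_sign[of p b]
    by (intro mod_pos_pos_trivial) linarith+
  then show ?thesis using False by simp
qed

lemma nu_diff_eq:
  assumes "p > 0" "i \<le> p"
  shows "int p * (nu p l (i + j) - nu p l j) = int i * l + (int (p - i) * l) mod int p
     - (if (int (j + 1) * l) mod int p < (int (p - i) * l) mod int p then int p else 0)"
proof -
  have "(int (i + j) + 1) * l = (int (j + 1) * l - int (p - i) * l) + l * int p"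
    using assms(2) by (simp add: algebra_simps)
  then have "((int (i + j) + 1) * l) mod int p
      = ((int (j + 1) * l) mod int p - (int (p - i) * l) mod int p) mod int p"
    by (simp add: mod_diff_eq)
  also have "\<dots> = (int (j + 1) * l) mod int p - (int (p - i) * l) mod int p
      + (if (int (j + 1) * l) mod int p < (int (p - i) * l) mod int p then int p else 0)"
    using assms(1) by (simp add: mod_diff_mod_eq)
  finally have rem: "((int (i + j) + 1) * l) mod int p = \<dots>" .
  have "int p * (nu p l (i + j) - nu p l j)
      = ((int (i + j) + 1) * l - ((int (i + j) + 1) * l) mod int p)
        - ((int j + 1) * l - ((int j + 1) * l) mod int p)"
    unfolding nu_eq_div[OF assms(1)] by (simp add: right_diff_distrib minus_mod_eq_mult_div)
  also have "\<dots> = int i * l - ((int (i + j) + 1) * l) mod int p + (int (j + 1) * l) mod int p"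
    by (simp add: algebra_simps)
  finally show ?thesis unfolding rem by simp
qed

lemma frac_of_int_divide:
  fixes z q :: int
  assumes "q > 0"
  shows "frac (of_int z / of_int q :: real) = of_int (z mod q) / of_int q"
proof -
  have "of_int z / of_int q = of_int (z div q) + of_int (z mod q) / (of_int q :: real)"
    using assms by (simp add: field_simps flip: of_int_mult of_int_add)
  moreover have "of_int (z mod q) / (of_int q :: real) \<in> {0..<1}"
    using assms by simp
  ultimately show ?thesis by simp
qed

lemma frac_mult_mod_less_iff:
  assumes "p > 0"
  shows "frac (real x * real_of_int (l mod int p) / real p) < frac (real y * real_of_int (l mod int p) / real p)
     \<longleftrightarrow> (int x * l) mod int p < (int y * l) mod int p"
proof -
  have "frac (real x * real_of_int (l mod int p) / real p) = real_of_int ((int x * l) mod int p) / real p" for x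
  proof -
    have "real x * real_of_int (l mod int p) / real p = of_int (int x * (l mod int p)) / of_int (int p)"
      by simp
    then show ?thesis
      using assms by (simp only: frac_of_int_divide) (simp add: mod_mult_right_eq)
  qed
  then show ?thesis using assms by (simp add: divide_less_cancel)
qed

lemma Eset_iff_mod:
  assumes "p > 0"
  shows "h \<in> Eset p (l mod int p) \<longleftrightarrow> 1 \<le> h \<and> h < p \<and>
    (\<forall>h'. 1 \<le> h' \<and> h' < h \<longrightarrow> (int h * l) mod int p < (int h' * l) mod int p)"
  unfolding Eset_def using frac_mult_mod_less_iff[OF assms] by auto

lemma mult_mod_prime_inj:
  assumes "prime p" "\<not> int p dvd l" "a < p" "b < p"
    and "(int a * l) mod int p = (int b * l) mod int p"
  shows "a = b"
proof -
  have "int p dvd (int a - int b) * l"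
    using assms(5) by (simp add: mod_eq_dvd_iff left_diff_distrib)
  then have "int p dvd int a - int b"
    using assms(1,2) by (simp add: prime_dvd_mult_iff)
  moreover have "\<bar>int a - int b\<bar> < int p" using assms(3,4) by simp
  ultimately show ?thesis
    using dvd_imp_le_int[of "int a - int b" "int p"] by fastforce
qed

lemma nmin_le_nu_diff:
  assumes "k \<le> p - 1 - i"
  shows "nmin p l i \<le> nu p l (i + k) - nu p l k"
  unfolding nmin_def using assms by (intro Min_le) auto

lemma nmin_eq_nu_diff_iff:
  assumes "p > 0" "i \<le> p" "k \<le> p - 1 - i"
  shows "nmin p l i = nu p l (i + k) - nu p l k \<longleftrightarrow>
    (int (k + 1) * l) mod int p < (int (p - i) * l) mod int p \<or>
    (\<forall>j \<le> p - 1 - i. \<not> (int (j + 1) * l) mod int p < (int (p - i) * l) mod int p)"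
    (is "_ \<longleftrightarrow> ?low k \<or> (\<forall>j \<le> _. \<not> ?low j)")
proof -
  define D where "D j = nu p l (i + j) - nu p l j" for j
  have D_le_iff: "D a \<le> D b \<longleftrightarrow> (?low b \<longrightarrow> ?low a)" for a b
  proof -
    have "D a \<le> D b \<longleftrightarrow> int p * D a \<le> int p * D b" using assms(1) by simp
    then show ?thesis unfolding D_def nu_diff_eq[OF assms(1,2)] using assms(1) by auto
  qed
  have nmin: "nmin p l i = Min (D ` {0..p - 1 - i})" unfolding nmin_def D_def ..
  show ?thesis
  proof
    assume "nmin p l i = nu p l (i + k) - nu p l k"
    then have "D k \<le> D j" if "j \<le> p - 1 - i" for j
      using that nmin_le_nu_diff[of j p i l] unfolding D_def by simp
    then show "?low k \<or> (\<forall>j \<le> p - 1 - i. \<not> ?low j)" using D_le_iff by blast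
  next
    assume "?low k \<or> (\<forall>j \<le> p - 1 - i. \<not> ?low j)"
    then have "\<forall>j \<in> {0..p - 1 - i}. D k \<le> D j" using D_le_iff by auto
    then have "Min (D ` {0..p - 1 - i}) = D k"
      using assms(3) by (intro Min_eqI) auto
    then show "nmin p l i = nu p l (i + k) - nu p l k" unfolding nmin D_def .
  qed
qed

lemma no_lower_mult_mod_iff_Eset:
  assumes "prime p" "\<not> int p dvd l" "i \<le> p - 1"
  shows "(\<forall>j \<le> p - 1 - i. \<not> (int (j + 1) * l) mod int p < (int (p - i) * l) mod int p)
    \<longleftrightarrow> p - i = p \<or> p - i \<in> Eset p (l mod int p)"
proof (cases "i = 0")
  case True
  then show ?thesis using prime_gt_0_nat[OF assms(1)] by (simp add: not_less)
next
  case False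
  have p0: "p > 0" using prime_gt_0_nat[OF assms(1)] .
  define R where "R x = (int x * l) mod int p" for x
  define h where "h = p - i"
  have h: "1 \<le> h" "h < p" "p - 1 - i = h - 1"
    using False assms(3) unfolding h_def by auto
  have "(\<forall>j \<le> h - 1. \<not> R (j + 1) < R h) \<longleftrightarrow> (\<forall>h'. 1 \<le> h' \<and> h' < h \<longrightarrow> R h < R h')"
  proof
    assume no_lower: "\<forall>j \<le> h - 1. \<not> R (j + 1) < R h"
    show "\<forall>h'. 1 \<le> h' \<and> h' < h \<longrightarrow> R h < R h'"
    proof (intro allI impI)
      fix h' assume h': "1 \<le> h' \<and> h' < h"
      then have "h' - 1 \<le> h - 1" "h' - 1 + 1 = h'" by auto
      then have "R h \<le> R h'" using no_lower by (metis not_less)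
      moreover have "R h' \<noteq> R h"
        using mult_mod_prime_inj[OF assms(1,2), of h' h] h' h(2) unfolding R_def by auto
      ultimately show "R h < R h'" by simp
    qed
  next
    assume lower: "\<forall>h'. 1 \<le> h' \<and> h' < h \<longrightarrow> R h < R h'"
    show "\<forall>j \<le> h - 1. \<not> R (j + 1) < R h"
    proof (intro allI impI)
      fix j assume "j \<le> h - 1"
      then consider "j + 1 = h" | "1 \<le> j + 1 \<and> j + 1 < h" using h(1) by linarith
      then show "\<not> R (j + 1) < R h" using lower by cases auto
    qed
  qed
  then show ?thesis
    using h Eset_iff_mod[OF p0] unfolding R_def h_def by auto
qed

lemma valuation_mult:
  "discrete_valuation v \<Longrightarrow> x \<noteq> 0 \<Longrightarrow> y \<noteq> 0 \<Longrightarrow> v (x * y) = v x + v y"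
  unfolding discrete_valuation_def by blast

lemma valuation_one: "discrete_valuation v \<Longrightarrow> v 1 = 0"
  using valuation_mult[of v 1 1] by simp

lemma valuation_power:
  assumes "discrete_valuation v" "x \<noteq> 0"
  shows "v (x ^ n) = int n * v x"
  by (induction n) (simp_all add: assms valuation_one valuation_mult algebra_simps)

lemma valuation_uminus:
  assumes "discrete_valuation v" "x \<noteq> 0"
  shows "v (- x) = v x"
proof -
  have "v (-1) = 0"
    using valuation_mult[OF assms(1), of "-1" "-1"] valuation_one[OF assms(1)] by simp
  then show ?thesis using valuation_mult[OF assms(1), of "-1" x] assms(2) by simp
qed

lemma maxideal_diff:
  assumes "discrete_valuation v" "x \<in> maxideal v" "y \<in> maxideal v"
  shows "x - y \<in> maxideal v"
proof (cases "x = 0 \<or> y = 0 \<or> x - y = 0")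
  case True
  then consider "x - y = - y" "y \<noteq> 0" | "x - y = x" | "x - y = 0" by fastforce
  then show ?thesis
    using assms valuation_uminus[OF assms(1), of y] by cases (auto simp: maxideal_def)
next
  case False
  then have "min (v x) (v (- y)) \<le> v (x + - y)"
    using assms(1) unfolding discrete_valuation_def by (metis neg_equal_0_iff_equal diff_conv_add_uminus)
  then show ?thesis
    using assms False valuation_uminus[OF assms(1), of y] by (auto simp: maxideal_def)
qed

lemma resid_eq_if_diff_maxideal:
  assumes "discrete_valuation v" "x - y \<in> maxideal v"
  shows "resid v x = resid v y"
proof -
  have "y - x \<in> maxideal v"
    using maxideal_diff[OF assms(1), of 0 "x - y"] assms(2) by (simp add: maxideal_def)
  then have "x - z \<in> maxideal v \<longleftrightarrow> y - z \<in> maxideal v" for z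
    using maxideal_diff[OF assms(1), of "x - z" "x - y"] maxideal_diff[OF assms(1), of "y - z" "y - x"]
      assms(2) by auto
  then show ?thesis unfolding resid_def by auto
qed

theorem proposition7p4:
  fixes v :: "'a::field \<Rightarrow> int" and \<pi> :: 'a
    and p :: nat and l :: int and k i :: nat
  assumes val: "discrete_valuation v"
    and unif: "\<pi> \<noteq> 0" "v \<pi> = 1"
    and resp: "of_nat p \<noteq> (0::'a)" "v (of_nat p) > 0"
    and pr: "prime p" and odd: "odd p"
    and ndvd: "\<not> int p dvd l"
    and ki: "k \<le> p - 1" "i \<le> p - 1" "k + i \<le> p - 1"
  shows "let a = l mod int p; h = p - i in
    (\<forall>j \<le> p - 1. mu \<pi> p l k j i \<in> valring v) \<and>
    (\<forall>j \<le> p - 1. j \<noteq> k + i \<longrightarrow> resid v (mu \<pi> p l k j i) = resid v 0) \<and>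
    (h \<notin> Eset p a \<longrightarrow>
       (if h = p \<or> frac (real (k + 1) * real_of_int a / real p) < frac (real h * real_of_int a / real p)
        then resid v (mu \<pi> p l k (k + i) i) = resid v 1
        else resid v (mu \<pi> p l k (k + i) i) = resid v 0)) \<and>
    (h \<in> Eset p a \<longrightarrow> resid v (mu \<pi> p l k (k + i) i) = resid v 1)"
proof -
  define e where "e = nu p l (k + i) - nu p l k - nmin p l i"
  have p0: "p > 0" using pr prime_gt_0_nat by blast
  have k_range: "k \<le> p - 1 - i" using ki(3) by simp
  have "e \<ge> 0" using nmin_le_nu_diff[OF k_range] unfolding e_def by (simp add: add.commute)
  have "e = 0 \<longleftrightarrow> nmin p l i = nu p l (i + k) - nu p l k"
    unfolding e_def by (auto simp: add.commute)
  also have "\<dots> \<longleftrightarrow> (int (k + 1) * l) mod int p < (int (p - i) * l) mod int p \<or>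
      (\<forall>j \<le> p - 1 - i. \<not> (int (j + 1) * l) mod int p < (int (p - i) * l) mod int p)"
    using ki(2) by (intro nmin_eq_nu_diff_iff[OF p0 _ k_range]) simp
  also have "\<dots> \<longleftrightarrow> frac (real (k + 1) * real_of_int (l mod int p) / real p)
        < frac (real (p - i) * real_of_int (l mod int p) / real p) \<or>
      p - i = p \<or> p - i \<in> Eset p (l mod int p)"
    by (simp only: frac_mult_mod_less_iff[OF p0] no_lower_mult_mod_iff_Eset[OF pr ndvd ki(2)])
  finally have e_zero_iff: "e = 0 \<longleftrightarrow> \<dots>" .
  have diag: "mu \<pi> p l k (k + i) i = \<pi> ^ nat e"
    unfolding mu_def e_def[symmetric] using \<open>e \<ge> 0\<close> by (simp add: power_int_def)
  have v_diag: "v (\<pi> ^ nat e) = e"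
    using valuation_power[OF val unif(1)] unif(2) \<open>e \<ge> 0\<close> by simp
  have resid_diag: "resid v (mu \<pi> p l k (k + i) i) = (if e = 0 then resid v 1 else resid v 0)"
    using resid_eq_if_diff_maxideal[OF val, of "\<pi> ^ nat e" 0] v_diag \<open>e \<ge> 0\<close>
    by (auto simp: diag maxideal_def)
  have "mu \<pi> p l k j i \<in> valring v" for j
    using v_diag \<open>e \<ge> 0\<close> diag by (cases "j = k + i") (simp_all add: mu_def valring_def)
  moreover have "mu \<pi> p l k j i = 0" if "j \<noteq> k + i" for j using that by (simp add: mu_def)
  ultimately show ?thesis
    unfolding Let_def resid_diag using e_zero_iff by auto
qed

end
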